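(* Let $R_1,R_2$ be commutative rings with nonzero identity, $I_1$ an ideal of $R_1$, $I_2$ an ideal of $R_2$, $R=R_1\times R_2$ and $I=I_1\times I_2$. Then (a) $\omega(\Gamma''_I(R))\geq\max\{\omega(\Gamma''_{I_1}(R_1)),\omega(\Gamma''_{I_2}(R_2))\}$; (b) $\chi(\Gamma''_I(R))\geq\max\{\chi(\Gamma''_{I_1}(R_1)),\chi(\Gamma''_{I_2}(R_2))\}$.
   Context: $R_1\times R_2$ has componentwise operations. For a commutative ring $S$ and an ideal $J$ of $S$, $\Gamma''_J(S)$ is the simple undirected graph whose vertex set is $\{x\in S\setminus J : xS+J\neq S\}$, with distinct vertices $x,y$ adjacent if and only if $x\notin yS+J$ and $y\notin xS+J$. $\omega(G)$ is the clique number of $G$ (the number of vertices in a largest complete subgraph) and $\chi(G)$ is the chromatic number of $G$ (the minimal number of colors in a coloring of the vertices in which adjacent vertices get different colors). *)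

theory Defs
  imports "HOL-Algebra.Chinese_Remainder" "HOL-Library.Extended_Nat"
begin

definition gen_plus :: "('a, 'm) ring_scheme \<Rightarrow> 'a \<Rightarrow> 'a set \<Rightarrow> 'a set" where
  "gen_plus S x J = {x \<otimes>\<^bsub>S\<^esub> s \<oplus>\<^bsub>S\<^esub> j | s j. s \<in> carrier S \<and> j \<in> J}"

definition gvert :: "('a, 'm) ring_scheme \<Rightarrow> 'a set \<Rightarrow> 'a set" where
  "gvert S J = {x \<in> carrier S - J. gen_plus S x J \<noteq> carrier S}"

definition gadj :: "('a, 'm) ring_scheme \<Rightarrow> 'a set \<Rightarrow> 'a \<Rightarrow> 'a \<Rightarrow> bool" where
  "gadj S J x y \<longleftrightarrow> x \<in> gvert S J \<and> y \<in> gvert S J \<and> x \<noteq> y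
      \<and> x \<notin> gen_plus S y J \<and> y \<notin> gen_plus S x J"

text \<open>Simple graphs given by a vertex set V and a symmetric irreflexive adjacency E.
  Clique number: supremum of the sizes of finite cliques (\<infinity> if unbounded).\<close>
definition clique_number :: "'a set \<Rightarrow> ('a \<Rightarrow> 'a \<Rightarrow> bool) \<Rightarrow> enat" where
  "clique_number V E = Sup {enat (card C) | C. C \<subseteq> V \<and> finite C \<and>
      (\<forall>x\<in>C. \<forall>y\<in>C. x \<noteq> y \<longrightarrow> E x y)}"

definition chromatic_number :: "'a set \<Rightarrow> ('a \<Rightarrow> 'a \<Rightarrow> bool) \<Rightarrow> enat" where
  "chromatic_number V E = Inf {enat (card (f ` V)) | f :: 'a \<Rightarrow> nat. finite (f ` V) \<and>
      (\<forall>x\<in>V. \<forall>y\<in>V. E x y \<longrightarrow> f x \<noteq> f y)}"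

abbreviation omega_G :: "('a, 'm) ring_scheme \<Rightarrow> 'a set \<Rightarrow> enat" where
  "omega_G S J \<equiv> clique_number (gvert S J) (gadj S J)"

abbreviation chi_G :: "('a, 'm) ring_scheme \<Rightarrow> 'a set \<Rightarrow> enat" where
  "chi_G S J \<equiv> chromatic_number (gvert S J) (gadj S J)"

end

theory Submission
  imports Defs
begin

text \<open>The maps \<open>x \<mapsto> (x, 0)\<close> and \<open>y \<mapsto> (0, y)\<close> are injective graph homomorphisms
  from \<open>\<Gamma>''(I\<^sub>1, R\<^sub>1)\<close> and \<open>\<Gamma>''(I\<^sub>2, R\<^sub>2)\<close> into \<open>\<Gamma>''(I, R)\<close>: the sets
  \<open>(x, y)R + I\<close> split as \<open>(xR\<^sub>1 + I\<^sub>1) \<times> (yR\<^sub>2 + I\<^sub>2)\<close>, and \<open>0R\<^sub>2 + I\<^sub>2 = I\<^sub>2\<close>.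
  Clique number and chromatic number do not decrease along such homomorphisms (a clique
  maps to a clique of the same size, and a colouring pulls back).\<close>

definition graph_hom ::
    "'a set \<Rightarrow> ('a \<Rightarrow> 'a \<Rightarrow> bool) \<Rightarrow> 'b set \<Rightarrow> ('b \<Rightarrow> 'b \<Rightarrow> bool) \<Rightarrow> ('a \<Rightarrow> 'b) \<Rightarrow> bool" where
  "graph_hom V E W F \<phi> \<longleftrightarrow> \<phi> ` V \<subseteq> W \<and> (\<forall>x\<in>V. \<forall>y\<in>V. E x y \<longrightarrow> F (\<phi> x) (\<phi> y))"

lemma clique_number_mono_inj_hom:
  assumes hom: "graph_hom V E W F \<phi>" and inj: "inj_on \<phi> V"
  shows "clique_number V E \<le> clique_number W F"
  unfolding clique_number_def
proof (rule Sup_subset_mono, safe)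
  fix C assume C: "C \<subseteq> V" "finite C" "\<forall>x\<in>C. \<forall>y\<in>C. x \<noteq> y \<longrightarrow> E x y"
  have "card (\<phi> ` C) = card C"
    using C(1) inj by (meson card_image inj_on_subset)
  moreover have "\<phi> ` C \<subseteq> W" "finite (\<phi> ` C)"
    using C hom by (auto simp: graph_hom_def image_subset_iff)
  moreover have "\<forall>a\<in>\<phi> ` C. \<forall>b\<in>\<phi> ` C. a \<noteq> b \<longrightarrow> F a b"
    using C hom by (auto simp: graph_hom_def) (metis subsetD)
  ultimately show "\<exists>D. enat (card C) = enat (card D) \<and> D \<subseteq> W \<and> finite D \<and>
      (\<forall>x\<in>D. \<forall>y\<in>D. x \<noteq> y \<longrightarrow> F x y)" by metis
qed

lemma chromatic_number_mono_hom:
  assumes hom: "graph_hom V E W F \<phi>"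
  shows "chromatic_number V E \<le> chromatic_number W F"
  unfolding chromatic_number_def
proof (rule Inf_mono, safe)
  fix f :: "'b \<Rightarrow> nat"
  assume f: "finite (f ` W)" "\<forall>x\<in>W. \<forall>y\<in>W. F x y \<longrightarrow> f x \<noteq> f y"
  have "(f \<circ> \<phi>) ` V \<subseteq> f ` W"
    using hom by (auto simp: graph_hom_def)
  then have "finite ((f \<circ> \<phi>) ` V)" "card ((f \<circ> \<phi>) ` V) \<le> card (f ` W)"
    using f(1) by (simp_all add: finite_subset card_mono)
  moreover have "\<forall>x\<in>V. \<forall>y\<in>V. E x y \<longrightarrow> (f \<circ> \<phi>) x \<noteq> (f \<circ> \<phi>) y"
    using hom f(2) by (auto simp: graph_hom_def image_subset_iff)
  ultimately show "\<exists>a\<in>{enat (card (g ` V)) |g :: 'a \<Rightarrow> nat. finite (g ` V) \<and>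
      (\<forall>x\<in>V. \<forall>y\<in>V. E x y \<longrightarrow> g x \<noteq> g y)}. a \<le> enat (card (f ` W))"
    by (intro bexI[of _ "enat (card ((f \<circ> \<phi>) ` V))"]) (simp, blast)
qed

lemma RDirProd_mult: "(a, b) \<otimes>\<^bsub>RDirProd R S\<^esub> (c, d) = (a \<otimes>\<^bsub>R\<^esub> c, b \<otimes>\<^bsub>S\<^esub> d)"
  by (simp add: RDirProd_def DirProd_def monoid.defs)

lemma RDirProd_add: "(a, b) \<oplus>\<^bsub>RDirProd R S\<^esub> (c, d) = (a \<oplus>\<^bsub>R\<^esub> c, b \<oplus>\<^bsub>S\<^esub> d)"
  by (simp add: RDirProd_def DirProd_def monoid.defs)

lemma gen_plus_RDirProd:
  "gen_plus (RDirProd R S) (x, y) (I \<times> J) = gen_plus R x I \<times> gen_plus S y J"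
proof (intro equalityI subsetI)
  fix z assume "z \<in> gen_plus (RDirProd R S) (x, y) (I \<times> J)"
  then obtain s t j k where "s \<in> carrier R" "t \<in> carrier S" "j \<in> I" "k \<in> J"
    and "z = (x, y) \<otimes>\<^bsub>RDirProd R S\<^esub> (s, t) \<oplus>\<^bsub>RDirProd R S\<^esub> (j, k)"
    unfolding gen_plus_def RDirProd_carrier by blast
  then show "z \<in> gen_plus R x I \<times> gen_plus S y J"
    unfolding gen_plus_def by (auto simp: RDirProd_mult RDirProd_add)
next
  fix z assume "z \<in> gen_plus R x I \<times> gen_plus S y J"
  then obtain s t j k where "s \<in> carrier R" "t \<in> carrier S" "j \<in> I" "k \<in> J"
    and "z = (x \<otimes>\<^bsub>R\<^esub> s \<oplus>\<^bsub>R\<^esub> j, y \<otimes>\<^bsub>S\<^esub> t \<oplus>\<^bsub>S\<^esub> k)"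
    unfolding gen_plus_def by blast
  then show "z \<in> gen_plus (RDirProd R S) (x, y) (I \<times> J)"
    unfolding gen_plus_def RDirProd_carrier by (auto simp: RDirProd_mult RDirProd_add)
qed

lemma (in ideal) gen_plus_zero: "gen_plus R \<zero> I = I"
proof (intro equalityI subsetI)
  fix z assume "z \<in> gen_plus R \<zero> I"
  then obtain s j where "s \<in> carrier R" "j \<in> I" "z = \<zero> \<otimes> s \<oplus> j"
    unfolding gen_plus_def by blast
  then show "z \<in> I" by simp
next
  fix j assume "j \<in> I"
  then have "j = \<zero> \<otimes> \<zero> \<oplus> j" and "\<zero> \<in> carrier R" by simp_all
  with \<open>j \<in> I\<close> show "j \<in> gen_plus R \<zero> I"
    unfolding gen_plus_def by blast
qed

lemma (in ideal) gen_plus_nonempty: "gen_plus R x I \<noteq> {}"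
proof -
  have "\<zero> \<in> carrier R" "\<zero> \<in> I" by simp_all
  then have "x \<otimes> \<zero> \<oplus> \<zero> \<in> gen_plus R x I"
    unfolding gen_plus_def by blast
  then show ?thesis by blast
qed

lemma gvert_RDirProd_iff:
  assumes "ideal I R" and "ideal J S"
  shows "(x, y) \<in> gvert (RDirProd R S) (I \<times> J) \<longleftrightarrow>
    x \<in> carrier R \<and> y \<in> carrier S \<and> (x \<notin> I \<or> y \<notin> J) \<and>
    (gen_plus R x I \<noteq> carrier R \<or> gen_plus S y J \<noteq> carrier S)"
proof -
  have "gen_plus R x I \<noteq> {}" "gen_plus S y J \<noteq> {}"
    using ideal.gen_plus_nonempty assms by metis+
  then show ?thesis
    by (auto simp: gvert_def RDirProd_carrier gen_plus_RDirProd times_eq_iff)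
qed

lemma graph_hom_Pair_zero_right:
  assumes "ideal I R" and "ideal J S"
  shows "graph_hom (gvert R I) (gadj R I) (gvert (RDirProd R S) (I \<times> J))
           (gadj (RDirProd R S) (I \<times> J)) (\<lambda>x. (x, \<zero>\<^bsub>S\<^esub>))"
proof -
  interpret J: ideal J S by fact
  have "(x, \<zero>\<^bsub>S\<^esub>) \<in> gvert (RDirProd R S) (I \<times> J)" if "x \<in> gvert R I" for x
    using that unfolding gvert_RDirProd_iff[OF assms] by (simp add: gvert_def)
  then show ?thesis
    by (auto simp: graph_hom_def gadj_def gen_plus_RDirProd J.gen_plus_zero)
qed

lemma graph_hom_Pair_zero_left:
  assumes "ideal I R" and "ideal J S"
  shows "graph_hom (gvert S J) (gadj S J) (gvert (RDirProd R S) (I \<times> J))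
           (gadj (RDirProd R S) (I \<times> J)) (\<lambda>y. (\<zero>\<^bsub>R\<^esub>, y))"
proof -
  interpret I: ideal I R by fact
  have "(\<zero>\<^bsub>R\<^esub>, y) \<in> gvert (RDirProd R S) (I \<times> J)" if "y \<in> gvert S J" for y
    using that unfolding gvert_RDirProd_iff[OF assms] by (simp add: gvert_def)
  then show ?thesis
    by (auto simp: graph_hom_def gadj_def gen_plus_RDirProd I.gen_plus_zero)
qed

theorem corollary2p5:
  fixes R1 :: "('a, 'm) ring_scheme" and R2 :: "('b, 'n) ring_scheme"
  assumes "cring R1" and "cring R2"
    and "\<one>\<^bsub>R1\<^esub> \<noteq> \<zero>\<^bsub>R1\<^esub>" and "\<one>\<^bsub>R2\<^esub> \<noteq> \<zero>\<^bsub>R2\<^esub>"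
    and "ideal I1 R1" and "ideal I2 R2"
  shows "omega_G (RDirProd R1 R2) (I1 \<times> I2) \<ge> max (omega_G R1 I1) (omega_G R2 I2)
     \<and> chi_G (RDirProd R1 R2) (I1 \<times> I2) \<ge> max (chi_G R1 I1) (chi_G R2 I2)"
proof -
  note hom1 = graph_hom_Pair_zero_right[OF assms(5,6)]
  note hom2 = graph_hom_Pair_zero_left[OF assms(5,6)]
  have inj1: "inj_on (\<lambda>x. (x, \<zero>\<^bsub>R2\<^esub>)) (gvert R1 I1)"
    and inj2: "inj_on (\<lambda>y. (\<zero>\<^bsub>R1\<^esub>, y)) (gvert R2 I2)"
    by (simp_all add: inj_on_def)
  show ?thesis
    using clique_number_mono_inj_hom[OF hom1 inj1] clique_number_mono_inj_hom[OF hom2 inj2]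
      chromatic_number_mono_hom[OF hom1] chromatic_number_mono_hom[OF hom2]
    by simp
qed

end
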